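(* Let $n,i$ be natural numbers and let $A$ be a brace of cardinality $p^n$, where $p$ is a prime with $p>n+1$. Then $\mathrm{ann}(p^i)=\{a\in A: p^ia=0\}$ is an ideal of $A$.
   Context: A (left) brace is a set $A$ with binary operations $+,\circ$ such that $(A,+)$ is an abelian group, $(A,\circ)$ is a group, and $a\circ(b+c)+a=a\circ b+a\circ c$ for all $a,b,c$. Write $a*b=a\circ b-a-b$. An ideal of a brace $A$ is a subgroup $I$ of $(A,+)$ which is a normal subgroup of $(A,\circ)$ and satisfies $a*x\in I$ for all $a\in A$, $x\in I$; equivalently, an additive subgroup $I$ with $A*I\subseteq I$ and $I*A\subseteq I$. $p^ia$ denotes the $p^i$-fold additive multiple of $a$. *)

theory Defs
  imports "HOL-Algebra.Algebra" "HOL-Computational_Algebra.Primes"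
begin

definition add_grp :: "'a set \<Rightarrow> ('a \<Rightarrow> 'a \<Rightarrow> 'a) \<Rightarrow> 'a \<Rightarrow> 'a monoid" where
  "add_grp A ad z = \<lparr>carrier = A, monoid.mult = ad, one = z\<rparr>"

definition circ_grp :: "'a set \<Rightarrow> ('a \<Rightarrow> 'a \<Rightarrow> 'a) \<Rightarrow> 'a \<Rightarrow> 'a monoid" where
  "circ_grp A cm e = \<lparr>carrier = A, monoid.mult = cm, one = e\<rparr>"

definition brace :: "'a set \<Rightarrow> ('a \<Rightarrow> 'a \<Rightarrow> 'a) \<Rightarrow> 'a \<Rightarrow> ('a \<Rightarrow> 'a \<Rightarrow> 'a) \<Rightarrow> 'a \<Rightarrow> bool" where
  "brace A ad z cm e \<longleftrightarrow>
     comm_group (add_grp A ad z) \<and> group (circ_grp A cm e) \<and>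
     (\<forall>a\<in>A. \<forall>b\<in>A. \<forall>c\<in>A. ad (cm a (ad b c)) a = ad (cm a b) (cm a c))"

definition brace_star :: "'a set \<Rightarrow> ('a \<Rightarrow> 'a \<Rightarrow> 'a) \<Rightarrow> 'a \<Rightarrow> ('a \<Rightarrow> 'a \<Rightarrow> 'a) \<Rightarrow> 'a \<Rightarrow> 'a \<Rightarrow> 'a" where
  "brace_star A ad z cm a b =
     ad (ad (cm a b) (inv\<^bsub>add_grp A ad z\<^esub> a)) (inv\<^bsub>add_grp A ad z\<^esub> b)"

definition brace_ideal :: "'a set \<Rightarrow> ('a \<Rightarrow> 'a \<Rightarrow> 'a) \<Rightarrow> 'a \<Rightarrow> ('a \<Rightarrow> 'a \<Rightarrow> 'a) \<Rightarrow> 'a \<Rightarrow> 'a set \<Rightarrow> bool" where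
  "brace_ideal A ad z cm e I \<longleftrightarrow>
     subgroup I (add_grp A ad z) \<and> normal I (circ_grp A cm e) \<and>
     (\<forall>a\<in>A. \<forall>x\<in>I. brace_star A ad z cm a x \<in> I)"

definition add_mult :: "'a set \<Rightarrow> ('a \<Rightarrow> 'a \<Rightarrow> 'a) \<Rightarrow> 'a \<Rightarrow> nat \<Rightarrow> 'a \<Rightarrow> 'a" where
  "add_mult A ad z k a = a [^]\<^bsub>add_grp A ad z\<^esub> k"

definition ann :: "'a set \<Rightarrow> ('a \<Rightarrow> 'a \<Rightarrow> 'a) \<Rightarrow> 'a \<Rightarrow> nat \<Rightarrow> 'a set" where
  "ann A ad z k = {a \<in> A. add_mult A ad z k a = z}"

end

theory Submission
  imports Defs "HOL-Computational_Algebra.Polynomial"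
begin

text \<open>Write \<lambda>_a(y) = a \<circ> y - a and N_a = \<lambda>_a - 1, so that N_a(y) = a * y. Both maps are
  additive, and the \<circ>-power a^\<circ>m = \<Sum>_k (m choose k+1) N_a^k(a) is a polynomial in N_a applied
  to a. Since \<lambda>_a has order dividing p^n, the congruence (1 + N)^(p^n) \<equiv> 1 + N^(p^n) (mod p)
  shows N_a^(p^n)(A) \<subseteq> pA, hence N_a^(n p^n)(A) \<subseteq> p^n A = 0. The images of the powers of N_a
  thus form a descending chain of subgroups of (A, +) that strictly decreases until it reaches 0,
  whence N_a^n = 0. For p > n the term N_a^(p-1)(a) of a^\<circ>p vanishes, leaving a^\<circ>p = u(pa) with
  u = 1 + N_a h(N_a) injective; by induction a^\<circ>(p^i) = 0 iff p^i a = 0. So ann(p^i) consists of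
  the elements whose \<circ>-order divides p^i and is closed under \<circ>-inverses and conjugation.
  Closure under +, \<circ> and a * - holds in any brace because \<lambda>_a and N_a are additive.\<close>

lemma add_power_prime:
  fixes x y :: "'b::comm_semiring_1"
  assumes "Factorial_Ring.prime (p::nat)"
  shows "\<exists>s. (x + y) ^ p = x ^ p + y ^ p + of_nat p * s"
proof -
  have p: "p \<ge> 2" using assms prime_ge_2_nat by blast
  have middle: "(of_nat (p choose k) :: 'b) = of_nat p * of_nat ((p choose k) div p)"
    if "k \<in> {1..<p}" for k
    using dvd_choose_prime[OF _ _ _ assms, of k] that by (simp flip: of_nat_mult)
  have "{..p} = insert 0 (insert p {1..<p})" using p by auto
  then have "(x + y) ^ p = x ^ p + y ^ p +
      (\<Sum>k\<in>{1..<p}. of_nat (p choose k) * x ^ k * y ^ (p - k))"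
    using p by (simp add: binomial_ring add_ac)
  also have "\<dots> = x ^ p + y ^ p +
      of_nat p * (\<Sum>k\<in>{1..<p}. of_nat ((p choose k) div p) * x ^ k * y ^ (p - k))"
    by (auto simp: middle sum_distrib_left mult.assoc intro!: sum.cong)
  finally show ?thesis by blast
qed

lemma one_add_power_prime_power:
  fixes x :: "'b::comm_semiring_1"
  assumes "Factorial_Ring.prime (p::nat)"
  shows "\<exists>r. (1 + x) ^ (p ^ m) = 1 + x ^ (p ^ m) + of_nat p * r"
proof (induction m)
  case 0
  show ?case by (rule exI[of _ 0]) simp
next
  case (Suc m)
  then obtain r where r: "(1 + x) ^ (p ^ m) = 1 + x ^ (p ^ m) + of_nat p * r" by blast
  obtain s where s: "(1 + x ^ (p ^ m) + of_nat p * r) ^ p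
      = (1 + x ^ (p ^ m)) ^ p + (of_nat p * r) ^ p + of_nat p * s"
    using add_power_prime[OF assms] by blast
  obtain t where t: "(1 + x ^ (p ^ m)) ^ p = 1 + x ^ (p ^ Suc m) + of_nat p * t"
    using add_power_prime[OF assms, of 1 "x ^ (p ^ m)"] by (auto simp: power_mult[symmetric] mult.commute)
  have "(of_nat p * r) ^ p = (of_nat p :: 'b) * (of_nat p ^ (p - 1) * r ^ p)"
    using prime_gt_0_nat[OF assms] by (cases p) (simp_all add: power_mult_distrib mult_ac)
  then have "(1 + x) ^ (p ^ Suc m) = 1 + x ^ (p ^ Suc m) + of_nat p * (t + of_nat p ^ (p - 1) * r ^ p + s)"
    using r s t by (simp add: power_mult mult.commute[of p] distrib_left add_ac)
  then show ?case by blast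
qed

text \<open>In a brace, a^\<circ>m = circ_power_poly m (\<lambda>_a - 1) (a), where
  circ_power_poly m = \<Sum>_(k<m) (1 + X)^k.\<close>
fun circ_power_poly :: "nat \<Rightarrow> nat poly" where
  "circ_power_poly 0 = 0"
| "circ_power_poly (Suc m) = 1 + [:1, 1:] * circ_power_poly m"

lemma coeff_circ_power_poly: "coeff (circ_power_poly m) k = m choose (k + 1)"
proof (induction m arbitrary: k)
  case (Suc m)
  have "[:1, 1:] * circ_power_poly m = circ_power_poly m + pCons 0 (circ_power_poly m)"
    by (simp add: one_pCons flip: One_nat_def)
  then show ?case using Suc by (cases k) (auto simp: coeff_pCons)
qed simp

lemma circ_power_poly_prime:
  assumes "Factorial_Ring.prime (p::nat)"
  shows "\<exists>h. circ_power_poly p = monom 1 (p - 1) + of_nat p * (1 + pCons 0 h)"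
proof -
  have p: "p \<ge> 2" using assms prime_ge_2_nat by blast
  define g where "g = Poly (map (\<lambda>k. (p choose (k + 1)) div p) [0..<p - 1])"
  have coeff_g: "coeff g k = (if k < p - 1 then (p choose (k + 1)) div p else 0)" for k
    by (simp add: g_def nth_default_def)
  obtain h where h: "g = pCons 1 h"
    using coeff_g[of 0] p by (cases g) (auto simp: coeff_pCons)
  have "circ_power_poly p = monom 1 (p - 1) + smult p g"
  proof (rule poly_eqI)
    fix k
    show "coeff (circ_power_poly p) k = coeff (monom 1 (p - 1) + smult p g) k"
    proof (cases "k < p - 1")
      case True
      then have "p dvd (p choose (k + 1))" using p by (intro dvd_choose_prime[OF _ _ _ assms]) auto
      then show ?thesis using True by (simp add: coeff_circ_power_poly coeff_g)
    next
      case False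
      then show ?thesis using p by (cases "k = p - 1") (auto simp: coeff_circ_power_poly coeff_g)
    qed
  qed
  then show ?thesis by (auto simp: h of_nat_poly one_pCons)
qed

lemma (in group) conj_nat_pow:
  assumes "g \<in> carrier G" "h \<in> carrier G"
  shows "(g \<otimes> h \<otimes> inv g) [^] (k::nat) = g \<otimes> h [^] k \<otimes> inv g"
proof (induction k)
  case (Suc k)
  have "inv g \<otimes> (g \<otimes> x) = x" if "x \<in> carrier G" for x
    using assms that by (simp flip: m_assoc)
  then show ?case using Suc assms by (simp add: m_assoc)
qed (use assms in simp)

lemma (in group) card_descending_subgroups_le:
  assumes "finite (carrier G)" "card (carrier G) = p ^ n" "Factorial_Ring.prime p"
    and "\<And>k. subgroup (S k) G" "\<And>k. S (Suc k) \<subseteq> S k"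
    and "\<And>k. S (Suc k) = S k \<Longrightarrow> S k = {\<one>}"
  shows "card (S k) \<le> p ^ (n - k)"
proof (induction k)
  have "card (S 0) \<le> card (carrier G)"
    using assms(1,4) subgroup.subset card_mono by metis
  then show "card (S 0) \<le> p ^ (n - 0)" using assms(2) by simp
next
  case (Suc k)
  have p: "p \<ge> 2" using assms(3) prime_ge_2_nat by blast
  have prime_power_card: "\<exists>j. card (S k) = p ^ j" for k
  proof -
    have "card (S k) dvd p ^ n"
      using lagrange[OF assms(4), of k] assms(2) unfolding Coset.order_def by (metis dvd_triv_right)
    then show ?thesis using divides_primepow_nat[OF assms(3)] by blast
  qed
  show ?case
  proof (cases "S (Suc k) = S k")
    case True
    then have "S (Suc k) = {\<one>}" using assms(6) by simp
    then show ?thesis using p by simp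
  next
    case False
    have "finite (S k)"
      using assms(1,4) subgroup.subset finite_subset by metis
    then have less: "card (S (Suc k)) < card (S k)"
      using False assms(5) by (simp add: psubset_card_mono psubsetI)
    obtain i j where i: "card (S (Suc k)) = p ^ i" and j: "card (S k) = p ^ j"
      using prime_power_card by blast
    have "i < j" using less i j p by (simp add: power_strict_increasing_iff)
    moreover have "j \<le> n - k" using Suc j p by (simp add: power_increasing_iff)
    ultimately show ?thesis using i p by (simp add: power_increasing)
  qed
qed

lemma add_grp_simps [simp]:
  "carrier (add_grp A ad z) = A" "monoid.mult (add_grp A ad z) = ad" "one (add_grp A ad z) = z"
  by (simp_all add: add_grp_def)

lemma circ_grp_simps [simp]:
  "carrier (circ_grp A cm e) = A" "monoid.mult (circ_grp A cm e) = cm" "one (circ_grp A cm e) = e"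
  by (simp_all add: circ_grp_def)

locale left_brace =
  fixes A :: "'a set" and ad :: "'a \<Rightarrow> 'a \<Rightarrow> 'a" and z :: 'a
    and cm :: "'a \<Rightarrow> 'a \<Rightarrow> 'a" and e :: 'a
  assumes brace: "brace A ad z cm e"
begin

abbreviation G where "G \<equiv> add_grp A ad z"
abbreviation C where "C \<equiv> circ_grp A cm e"
abbreviation neg :: "'a \<Rightarrow> 'a" where "neg x \<equiv> inv\<^bsub>G\<^esub> x"
abbreviation mul :: "nat \<Rightarrow> 'a \<Rightarrow> 'a" where "mul k x \<equiv> x [^]\<^bsub>G\<^esub> k"
abbreviation star :: "'a \<Rightarrow> 'a \<Rightarrow> 'a" where "star \<equiv> brace_star A ad z cm"

sublocale plus: comm_group G
  using brace by (simp add: brace_def)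

sublocale circ: group C
  using brace by (simp add: brace_def)

lemma brace_distrib: "\<lbrakk>a \<in> A; b \<in> A; c \<in> A\<rbrakk> \<Longrightarrow> ad (cm a (ad b c)) a = ad (cm a b) (cm a c)"
  using brace by (simp add: brace_def)

lemma zero_closed [simp]: "z \<in> A"
  using plus.one_closed by simp

lemma add_closed [simp]: "\<lbrakk>x \<in> A; y \<in> A\<rbrakk> \<Longrightarrow> ad x y \<in> A"
  using plus.m_closed by simp

lemma circ_closed [simp]: "\<lbrakk>x \<in> A; y \<in> A\<rbrakk> \<Longrightarrow> cm x y \<in> A"
  using circ.m_closed by simp

lemma neg_closed [simp]: "x \<in> A \<Longrightarrow> neg x \<in> A"
  using plus.inv_closed by simp

lemma mul_closed [simp]: "x \<in> A \<Longrightarrow> mul k x \<in> A"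
  using plus.nat_pow_closed by simp

lemma circ_pow_closed [simp]: "a \<in> A \<Longrightarrow> a [^]\<^bsub>C\<^esub> (k::nat) \<in> A"
  using circ.nat_pow_closed by simp

lemma add_zero [simp]: "x \<in> A \<Longrightarrow> ad x z = x"
  using plus.r_one by simp

lemma zero_add [simp]: "x \<in> A \<Longrightarrow> ad z x = x"
  using plus.l_one by simp

lemma add_neg [simp]: "x \<in> A \<Longrightarrow> ad x (neg x) = z"
  using plus.r_inv by simp

lemma add_commute: "\<lbrakk>x \<in> A; y \<in> A\<rbrakk> \<Longrightarrow> ad x y = ad y x"
  using plus.m_comm by simp

lemma add_assoc: "\<lbrakk>x \<in> A; y \<in> A; w \<in> A\<rbrakk> \<Longrightarrow> ad (ad x y) w = ad x (ad y w)"
  using plus.m_assoc by simp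

lemma add_left_commute: "\<lbrakk>x \<in> A; y \<in> A; w \<in> A\<rbrakk> \<Longrightarrow> ad x (ad y w) = ad y (ad x w)"
  using plus.m_lcomm by simp

lemma add_left_cancel: "\<lbrakk>x \<in> A; y \<in> A; w \<in> A\<rbrakk> \<Longrightarrow> ad x y = ad x w \<longleftrightarrow> y = w"
  using plus.l_cancel[of x y w] by auto

lemma add_swap: "\<lbrakk>x \<in> A; y \<in> A; u \<in> A; w \<in> A\<rbrakk> \<Longrightarrow> ad (ad x y) (ad u w) = ad (ad x u) (ad y w)"
  by (simp add: add_assoc add_left_commute[of y])

lemma neg_unique: "\<lbrakk>x \<in> A; y \<in> A; ad x y = z\<rbrakk> \<Longrightarrow> neg x = y"
  using plus.inv_equality[of y x] by (simp add: add_commute)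

lemma neg_add: "\<lbrakk>x \<in> A; y \<in> A\<rbrakk> \<Longrightarrow> neg (ad x y) = ad (neg x) (neg y)"
  using plus.inv_mult by simp

lemma neg_zero [simp]: "neg z = z"
  using plus.inv_one by simp

lemma circ_zero [simp]: "a \<in> A \<Longrightarrow> cm a z = a"
  using brace_distrib[of a z z] add_left_cancel[of "cm a z" a "cm a z"] by simp

lemma circ_one_eq_zero: "e = z"
  using circ_zero[of e] circ.l_one[of z] circ.one_closed by simp

lemma zero_circ [simp]: "a \<in> A \<Longrightarrow> cm z a = a"
  using circ.l_one by (simp add: circ_one_eq_zero)

text \<open>The map \<open>\<lambda>\<^sub>a(y) = a \<circ> y - a\<close>; the brace axiom says exactly that it is additive.\<close>
definition lam :: "'a \<Rightarrow> 'a \<Rightarrow> 'a" where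
  "lam a y = ad (cm a y) (neg a)"

lemma lam_closed [simp]: "\<lbrakk>a \<in> A; y \<in> A\<rbrakk> \<Longrightarrow> lam a y \<in> A"
  by (simp add: lam_def)

lemma circ_eq_add_lam: "\<lbrakk>a \<in> A; y \<in> A\<rbrakk> \<Longrightarrow> cm a y = ad a (lam a y)"
  by (simp add: lam_def add_left_commute[of a])

lemma star_eq_lam: "\<lbrakk>a \<in> A; y \<in> A\<rbrakk> \<Longrightarrow> star a y = ad (lam a y) (neg y)"
  by (simp add: brace_star_def lam_def)

lemma lam_add:
  assumes "a \<in> A" "x \<in> A" "y \<in> A"
  shows "lam a (ad x y) = ad (lam a x) (lam a y)"
proof -
  have "ad (lam a x) (lam a y) = ad (ad (cm a (ad x y)) a) (ad (neg a) (neg a))"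
    using assms by (simp add: lam_def add_swap brace_distrib)
  also have "\<dots> = lam a (ad x y)"
    using assms add_swap[of "cm a (ad x y)" a "neg a" "neg a"] by (simp add: lam_def)
  finally show ?thesis ..
qed

lemma lam_circ:
  assumes "a \<in> A" "b \<in> A" "y \<in> A"
  shows "lam (cm a b) y = lam a (lam b y)"
proof -
  have "ad (cm a b) (lam (cm a b) y) = cm a (cm b y)"
    using assms circ.m_assoc by (simp add: circ_eq_add_lam[symmetric])
  also have "\<dots> = ad (cm a b) (lam a (lam b y))"
    using assms by (simp add: circ_eq_add_lam lam_add add_assoc)
  finally show ?thesis
    using assms by (simp add: add_left_cancel)
qed

lemma lam_zero_left [simp]: "y \<in> A \<Longrightarrow> lam z y = y"
  by (simp add: lam_def)

lemma mul_zero [simp]: "mul k z = z"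
  using plus.nat_pow_one by simp

lemma mul_add: "y \<in> A \<Longrightarrow> mul (m + k) y = ad (mul m y) (mul k y)"
  using plus.nat_pow_mult by simp

lemma mul_mult: "y \<in> A \<Longrightarrow> mul (m * k) y = mul m (mul k y)"
  using plus.nat_pow_pow[of y k m] by (simp add: mult.commute)

lemma mul_add_distrib: "\<lbrakk>x \<in> A; y \<in> A\<rbrakk> \<Longrightarrow> mul k (ad x y) = ad (mul k x) (mul k y)"
  using plus.nat_pow_distrib by simp

lemma endoI:
  "\<lbrakk>\<And>x. x \<in> A \<Longrightarrow> f x \<in> A; \<And>x y. \<lbrakk>x \<in> A; y \<in> A\<rbrakk> \<Longrightarrow> f (ad x y) = ad (f x) (f y)\<rbrakk>
    \<Longrightarrow> f \<in> hom G G"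
  by (simp add: hom_def)

lemma endo_closed [simp]: "\<lbrakk>f \<in> hom G G; x \<in> A\<rbrakk> \<Longrightarrow> f x \<in> A"
  using hom_in_carrier by fastforce

lemma endo_add: "\<lbrakk>f \<in> hom G G; x \<in> A; y \<in> A\<rbrakk> \<Longrightarrow> f (ad x y) = ad (f x) (f y)"
  using hom_mult by fastforce

lemma endo_zero [simp]: "f \<in> hom G G \<Longrightarrow> f z = z"
  using hom_one[of f G G] plus.is_group by simp

lemma endo_mul: "\<lbrakk>f \<in> hom G G; x \<in> A\<rbrakk> \<Longrightarrow> f (mul k x) = mul k (f x)"
  using hom_nat_pow[of f G G x k] plus.is_group by simp

lemma endo_funpow: "f \<in> hom G G \<Longrightarrow> f ^^ k \<in> hom G G"
  by (induction k) (auto intro!: endoI simp: endo_add)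

lemma funpow_closed [simp]: "\<lbrakk>f \<in> hom G G; x \<in> A\<rbrakk> \<Longrightarrow> (f ^^ k) x \<in> A"
  using endo_funpow endo_closed by blast

lemma funpow_zero [simp]: "f \<in> hom G G \<Longrightarrow> (f ^^ k) z = z"
  using endo_funpow endo_zero by blast

lemma lam_endo: "a \<in> A \<Longrightarrow> lam a \<in> hom G G"
  by (rule endoI) (simp_all add: lam_add)

lemma star_endo: "a \<in> A \<Longrightarrow> star a \<in> hom G G"
  by (rule endoI) (simp_all add: star_eq_lam lam_add neg_add add_swap)

definition peval :: "('a \<Rightarrow> 'a) \<Rightarrow> nat poly \<Rightarrow> 'a \<Rightarrow> 'a" where
  "peval f q y = foldr (\<lambda>c r. ad (mul c y) (f r)) (coeffs q) z"

context
  fixes f assumes f: "f \<in> hom G G"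
begin

lemma peval_0 [simp]: "peval f 0 y = z"
  by (simp add: peval_def)

lemma peval_pCons: "y \<in> A \<Longrightarrow> peval f (pCons c q) y = ad (mul c y) (f (peval f q y))"
  using f by (cases "c = 0 \<and> q = 0") (auto simp: peval_def cCons_def)

lemma peval_closed [simp]: "y \<in> A \<Longrightarrow> peval f q y \<in> A"
  using f by (induction q) (simp_all add: peval_pCons)

lemma peval_add: "y \<in> A \<Longrightarrow> peval f (q1 + q2) y = ad (peval f q1 y) (peval f q2 y)"
proof (induction q1 arbitrary: q2)
  case (pCons c q1)
  then show ?case
    using f by (cases q2) (simp add: peval_pCons mul_add endo_add add_swap)
qed simp

lemma peval_endo: "peval f q \<in> hom G G"
proof (rule endoI)
  fix x y assume xy: "x \<in> A" "y \<in> A"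
  show "peval f q (ad x y) = ad (peval f q x) (peval f q y)"
  proof (induction q)
    case (pCons c q)
    then show ?case
      using f xy add_swap[of "mul c x" "mul c y"] by (simp add: peval_pCons mul_add_distrib endo_add)
  qed simp
qed simp

lemma peval_smult: "y \<in> A \<Longrightarrow> peval f (smult c q) y = mul c (peval f q y)"
  using f by (induction q) (simp_all add: peval_pCons mul_add_distrib endo_mul mul_mult)

lemma peval_mult: "y \<in> A \<Longrightarrow> peval f (q1 * q2) y = peval f q1 (peval f q2 y)"
proof (induction q1 arbitrary: y)
  case (pCons c q1)
  then show ?case
    using f by (simp add: peval_add peval_smult peval_pCons)
qed simp

lemma peval_const: "y \<in> A \<Longrightarrow> peval f [:c:] y = mul c y"
  using f by (simp add: peval_pCons)

lemma peval_1: "y \<in> A \<Longrightarrow> peval f 1 y = y"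
  by (simp add: one_pCons peval_const)

lemma peval_of_nat: "y \<in> A \<Longrightarrow> peval f (of_nat c) y = mul c y"
  by (simp add: of_nat_poly peval_const)

lemma peval_monom_1: "y \<in> A \<Longrightarrow> peval f (monom 1 m) y = (f ^^ m) y"
  using f by (induction m) (simp_all add: monom_0 monom_Suc peval_pCons peval_const)

lemma peval_commute: "y \<in> A \<Longrightarrow> peval f q1 (peval f q2 y) = peval f q2 (peval f q1 y)"
proof -
  assume "y \<in> A"
  have "peval f (q1 * q2) y = peval f (q2 * q1) y" by (simp only: mult.commute)
  then show ?thesis using \<open>y \<in> A\<close> by (simp add: peval_mult)
qed

lemma peval_funpow_commute: "y \<in> A \<Longrightarrow> peval f q ((f ^^ m) y) = (f ^^ m) (peval f q y)"
  using peval_commute[of y q "monom 1 m"] by (simp add: peval_monom_1 del: One_nat_def)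

end

lemma lam_funpow: "\<lbrakk>a \<in> A; y \<in> A\<rbrakk> \<Longrightarrow> (lam a ^^ k) y = lam (a [^]\<^bsub>C\<^esub> k) y"
proof (induction k)
  case (Suc k)
  then show ?case using circ.nat_pow_Suc2[of a k] by (simp add: lam_circ)
qed (simp add: circ_one_eq_zero)

lemma peval_star_lam: "\<lbrakk>a \<in> A; y \<in> A\<rbrakk> \<Longrightarrow> peval (star a) [:1, 1:] y = lam a y"
  by (simp add: star_endo peval_pCons star_eq_lam add_left_commute[of y])

lemma peval_star_power_lam:
  "\<lbrakk>a \<in> A; y \<in> A\<rbrakk> \<Longrightarrow> peval (star a) ([:1, 1:] ^ k) y = (lam a ^^ k) y"
  by (induction k arbitrary: y)
    (simp_all add: star_endo peval_1 peval_mult peval_star_lam lam_endo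
      del: One_nat_def mult_pCons_left)

lemma circ_pow_eq_peval: "a \<in> A \<Longrightarrow> a [^]\<^bsub>C\<^esub> m = peval (star a) (circ_power_poly m) a"
proof (induction m)
  case 0
  then show ?case by (simp add: star_endo circ_one_eq_zero)
next
  case (Suc m)
  have "peval (star a) (circ_power_poly (Suc m)) a = ad a (lam a (a [^]\<^bsub>C\<^esub> m))"
    using Suc by (simp add: star_endo peval_add peval_1 peval_mult peval_star_lam
        del: mult_pCons_left One_nat_def)
  also have "\<dots> = a [^]\<^bsub>C\<^esub> Suc m"
    using Suc.prems circ.nat_pow_Suc2[of a m] by (simp add: circ_eq_add_lam)
  finally show ?case ..
qed

lemma peval_unipotent_eq_zero:
  assumes f: "f \<in> hom G G" and nilpotent: "\<And>y. y \<in> A \<Longrightarrow> (f ^^ m) y = z"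
    and w: "w \<in> A" and eq: "peval f (1 + pCons 0 h) w = z"
  shows "w = z"
proof -
  have "(f ^^ (m - j)) w = z" for j
  proof (induction j)
    case 0
    show ?case using nilpotent w by simp
  next
    case (Suc j)
    show ?case
    proof (cases "j < m")
      case True
      then have Suc_k: "m - j = Suc (m - Suc j)" by simp
      txt \<open>If \<open>f\<^sup>k\<^sup>+\<^sup>1 w = 0\<close> then \<open>f\<^sup>k w = f\<^sup>k (w + f(h(f) w)) - h(f)(f\<^sup>k\<^sup>+\<^sup>1 w) = 0\<close>.\<close>
      have "(f ^^ (m - Suc j)) (f (peval f h w)) = (f ^^ (m - j)) (peval f h w)"
        by (simp add: Suc_k funpow_Suc_right del: funpow.simps)
      also have "\<dots> = peval f h ((f ^^ (m - j)) w)"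
        using f w by (simp add: peval_funpow_commute)
      also have "\<dots> = z" using Suc.IH f peval_endo by simp
      finally have "(f ^^ (m - Suc j)) (peval f (1 + pCons 0 h) w) = (f ^^ (m - Suc j)) w"
        using f w by (simp add: peval_add peval_1 peval_pCons endo_add endo_funpow)
      then show ?thesis using eq f by (simp add: endo_funpow)
    next
      case False
      then show ?thesis using Suc.IH by simp
    qed
  qed
  from this[of m] show ?thesis by simp
qed

lemma ann_eq: "ann A ad z k = {x \<in> A. mul k x = z}"
  by (simp add: ann_def add_mult_def)

lemma ann_add_subgroup: "subgroup (ann A ad z k) G"
proof (rule plus.subgroupI)
  show "ann A ad z k \<subseteq> carrier G" "ann A ad z k \<noteq> {}"
    using zero_closed by (auto simp: ann_eq intro!: exI[of _ z])
  show "inv\<^bsub>G\<^esub> x \<in> ann A ad z k" if "x \<in> ann A ad z k" for x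
    using that plus.nat_pow_inv by (auto simp: ann_eq)
  show "x \<otimes>\<^bsub>G\<^esub> y \<in> ann A ad z k" if "x \<in> ann A ad z k" "y \<in> ann A ad z k" for x y
    using that by (auto simp: ann_eq mul_add_distrib)
qed

lemma star_ann: "\<lbrakk>a \<in> A; x \<in> ann A ad z k\<rbrakk> \<Longrightarrow> star a x \<in> ann A ad z k"
  using star_endo by (auto simp: ann_eq endo_mul[symmetric])

text \<open>\<open>k(x \<circ> y) = kx + \<lambda>\<^sub>x(ky)\<close>.\<close>
lemma circ_ann: "\<lbrakk>x \<in> ann A ad z k; y \<in> ann A ad z k\<rbrakk> \<Longrightarrow> cm x y \<in> ann A ad z k"
  using lam_endo by (auto simp: ann_eq circ_eq_add_lam mul_add_distrib endo_mul[symmetric])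

end

locale finite_p_brace = left_brace +
  fixes p n :: nat
  assumes finite: "finite A" and card: "card A = p ^ n" and prime: "Factorial_Ring.prime p"
begin

lemma star_funpow_order_mul_p:
  assumes a: "a \<in> A" and y: "y \<in> A"
  shows "\<exists>w \<in> A. (star a ^^ (p ^ n)) y = mul p w"
proof -
  have f: "star a \<in> hom G G" using star_endo a .
  have one_plus_X: "1 + monom 1 1 = [:1, 1::nat:]"
    by (simp add: monom_0 monom_Suc one_pCons)
  obtain r where "(1 + monom 1 1) ^ (p ^ n) = 1 + monom 1 1 ^ (p ^ n) + of_nat p * (r :: nat poly)"
    using one_add_power_prime_power[OF prime] by blast
  then have r: "[:1, 1:] ^ (p ^ n) = 1 + monom 1 (p ^ n) + of_nat p * r"
    unfolding one_plus_X monom_power power_one mult_1 .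
  have "y = (lam a ^^ (p ^ n)) y"
    using a y circ.pow_order_eq_1[of a] card by (simp add: lam_funpow Coset.order_def circ_one_eq_zero)
  also have "\<dots> = peval (star a) ([:1, 1:] ^ (p ^ n)) y"
    using a y by (simp add: peval_star_power_lam del: One_nat_def)
  also have "\<dots> = ad (ad y ((star a ^^ (p ^ n)) y)) (mul p (peval (star a) r y))"
    using f y by (simp add: r peval_add peval_1 peval_monom_1 peval_mult peval_of_nat
        del: One_nat_def)
  finally have "ad y (ad ((star a ^^ (p ^ n)) y) (mul p (peval (star a) r y))) = ad y z"
    using f y by (metis add_assoc add_zero funpow_closed mul_closed peval_closed)
  then have "ad ((star a ^^ (p ^ n)) y) (mul p (peval (star a) r y)) = z"
    using f y add_left_cancel by (meson add_closed funpow_closed mul_closed peval_closed zero_closed)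
  then have "neg (mul p (peval (star a) r y)) = (star a ^^ (p ^ n)) y"
    using f y by (metis add_commute neg_unique funpow_closed mul_closed peval_closed)
  then have "(star a ^^ (p ^ n)) y = mul p (neg (peval (star a) r y))"
    using f y by (simp add: plus.nat_pow_inv)
  then show ?thesis using f y by auto
qed

lemma star_funpow_order_mul_p_power:
  assumes a: "a \<in> A" and y: "y \<in> A"
  shows "\<exists>w \<in> A. (star a ^^ (p ^ n * r)) y = mul (p ^ r) w"
proof (induction r)
  case 0
  show ?case using y by auto
next
  case (Suc r)
  then obtain w where w: "w \<in> A" "(star a ^^ (p ^ n * r)) y = mul (p ^ r) w" by blast
  obtain u where u: "u \<in> A" "(star a ^^ (p ^ n)) w = mul p u"
    using star_funpow_order_mul_p[OF a w(1)] by blast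
  have "(star a ^^ (p ^ n * Suc r)) y = (star a ^^ (p ^ n)) (mul (p ^ r) w)"
    by (simp add: w(2) funpow_add)
  also have "\<dots> = mul (p ^ Suc r) u"
    using a w u by (simp add: star_endo endo_funpow endo_mul mul_mult[symmetric] mult.commute)
  finally show ?case using u by blast
qed

lemma star_funpow_large_eq_zero: "\<lbrakk>a \<in> A; y \<in> A\<rbrakk> \<Longrightarrow> (star a ^^ (p ^ n * n)) y = z"
  using star_funpow_order_mul_p_power[of a y n] plus.power_order_eq_one finite card by auto

lemma star_nilpotent:
  assumes a: "a \<in> A" and y: "y \<in> A" and k: "n \<le> k"
  shows "(star a ^^ k) y = z"
proof -
  define S where "S k = (star a ^^ k) ` A" for k
  have f: "star a \<in> hom G G" using star_endo a .
  have S_Suc: "S (Suc k) = star a ` S k" for k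
    by (simp add: S_def image_comp)
  have subgroup: "subgroup (S k) G" for k
    using group_hom.img_is_subgroup[of G G "star a ^^ k"] f plus.is_group
    by (simp add: S_def group_hom_def group_hom_axioms_def endo_funpow)
  have descending: "S (Suc k) \<subseteq> S k" for k
    using f by (auto simp: S_def funpow_Suc_right simp del: funpow.simps)
  have stable: "S k = {z}" if "S (Suc k) = S k" for k
  proof -
    have "S (k + m) = S k" for m
    proof (induction m)
      case (Suc m)
      then show ?case using that S_Suc[of "k + m"] S_Suc[of k] by simp
    qed simp
    moreover have "S (k + p ^ n * n) = (\<lambda>_. z) ` A"
      using f star_funpow_large_eq_zero[OF a] by (simp add: S_def funpow_add)
    ultimately show ?thesis using zero_closed by blast
  qed
  have "card (S n) \<le> 1"
    using plus.card_descending_subgroups_le[of p n S n] finite card prime subgroup descending stable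
    by simp
  moreover have "z \<in> S n" "(star a ^^ n) y \<in> S n"
    using f y by (auto simp: S_def intro!: image_eqI[of z _ z])
  moreover have "finite (S n)" using finite by (simp add: S_def)
  ultimately have "(star a ^^ n) y = z"
    by (metis card_le_Suc0_iff_eq One_nat_def)
  then show ?thesis
    using f k funpow_add[of "k - n" n "star a"] by simp
qed

lemma circ_pow_prime:
  assumes "n < p"
  obtains h where "\<And>a. a \<in> A \<Longrightarrow> a [^]\<^bsub>C\<^esub> p = peval (star a) (1 + pCons 0 h) (mul p a)"
proof -
  obtain h where h: "circ_power_poly p = monom 1 (p - 1) + of_nat p * (1 + pCons 0 h)"
    using circ_power_poly_prime[OF prime] by blast
  have "a [^]\<^bsub>C\<^esub> p = peval (star a) (1 + pCons 0 h) (mul p a)" if a: "a \<in> A" for a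
  proof -
    have f: "star a \<in> hom G G" using star_endo a .
    have "a [^]\<^bsub>C\<^esub> p = ad ((star a ^^ (p - 1)) a) (mul p (peval (star a) (1 + pCons 0 h) a))"
      using a f by (simp add: circ_pow_eq_peval h peval_add peval_mult peval_monom_1 peval_of_nat
          del: One_nat_def mult_pCons_left)
    also have "(star a ^^ (p - 1)) a = z"
      using star_nilpotent a assms by simp
    finally show ?thesis
      using a f peval_endo[OF f] by (simp add: endo_mul)
  qed
  then show thesis using that by blast
qed

lemma circ_pow_prime_power_eq_one_iff:
  assumes "n < p" and a: "a \<in> A"
  shows "a [^]\<^bsub>C\<^esub> (p ^ j) = e \<longleftrightarrow> mul (p ^ j) a = z"
  using a
proof (induction j arbitrary: a)
  case 0
  then show ?case by (simp add: circ_one_eq_zero)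
next
  case (Suc j)
  obtain h where h: "\<And>a. a \<in> A \<Longrightarrow> a [^]\<^bsub>C\<^esub> p = peval (star a) (1 + pCons 0 h) (mul p a)"
    using circ_pow_prime[OF \<open>n < p\<close>] by blast
  have f: "star a \<in> hom G G" using star_endo Suc.prems .
  have "a [^]\<^bsub>C\<^esub> (p ^ Suc j) = e \<longleftrightarrow> (a [^]\<^bsub>C\<^esub> p) [^]\<^bsub>C\<^esub> (p ^ j) = e"
    using Suc.prems circ.nat_pow_pow[of a p "p ^ j"] by simp
  also have "\<dots> \<longleftrightarrow> mul (p ^ j) (a [^]\<^bsub>C\<^esub> p) = z"
    using Suc.IH Suc.prems by simp
  also have "mul (p ^ j) (a [^]\<^bsub>C\<^esub> p) = peval (star a) (1 + pCons 0 h) (mul (p ^ Suc j) a)"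
    using Suc.prems f peval_endo[OF f] by (simp add: h endo_mul mul_mult[symmetric] mult.commute)
  also have "\<dots> = z \<longleftrightarrow> mul (p ^ Suc j) a = z"
    using peval_unipotent_eq_zero[OF f, of n "mul (p ^ Suc j) a" h] star_nilpotent[OF Suc.prems]
      endo_zero[OF peval_endo[OF f]] Suc.prems by auto
  finally show ?case .
qed

lemma ann_circ_normal:
  assumes "n < p"
  shows "ann A ad z (p ^ i) \<lhd> C"
proof -
  have ann_circ: "ann A ad z (p ^ i) = {x \<in> A. x [^]\<^bsub>C\<^esub> (p ^ i) = e}"
    using circ_pow_prime_power_eq_one_iff[OF assms] by (auto simp: ann_eq)
  have "subgroup (ann A ad z (p ^ i)) C"
  proof (rule circ.subgroupI)
    show "ann A ad z (p ^ i) \<subseteq> carrier C" "ann A ad z (p ^ i) \<noteq> {}"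
      using zero_closed by (auto simp: ann_eq intro!: exI[of _ z])
    show "inv\<^bsub>C\<^esub> x \<in> ann A ad z (p ^ i)" if "x \<in> ann A ad z (p ^ i)" for x
      using that circ.nat_pow_inv[of x "p ^ i"] circ.inv_closed[of x] circ.inv_one
      by (simp add: ann_circ)
    show "x \<otimes>\<^bsub>C\<^esub> y \<in> ann A ad z (p ^ i)" if "x \<in> ann A ad z (p ^ i)" "y \<in> ann A ad z (p ^ i)" for x y
      using circ_ann[OF that] by simp
  qed
  moreover have "g \<otimes>\<^bsub>C\<^esub> x \<otimes>\<^bsub>C\<^esub> inv\<^bsub>C\<^esub> g \<in> ann A ad z (p ^ i)"
    if "g \<in> A" "x \<in> ann A ad z (p ^ i)" for g x
    using that circ.conj_nat_pow[of g x "p ^ i"] circ.inv_closed[of g] circ.r_inv[of g] circ.r_one[of g]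
    by (simp add: ann_circ)
  ultimately show ?thesis by (simp add: circ.normal_inv_iff)
qed

end

theorem lemma15:
  fixes A :: "'a set" and ad cm :: "'a \<Rightarrow> 'a \<Rightarrow> 'a" and z e :: 'a
    and p n i :: nat
  assumes "brace A ad z cm e"
    and "finite A" and "card A = p ^ n"
    and "Factorial_Ring.prime p" and "p > n + 1"
  shows "brace_ideal A ad z cm e (ann A ad z (p ^ i))"
proof -
  interpret finite_p_brace A ad z cm e p n
    using assms by unfold_locales
  show ?thesis
    unfolding brace_ideal_def
    using ann_add_subgroup ann_circ_normal star_ann \<open>p > n + 1\<close> by simp
qed

end
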